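(* For every integer $n \ge 0$, every point $z \in \overline{D}(-\tfrac12 + 2^{2n}, 2^{-(2n+1)})$ has unbounded forward orbit under $f_1(z) = 3z^3 - \tfrac92 z^2 + 1$.
   Context: Let $|\cdot|$ denote the $2$-adic absolute value on $\mathbb{C}_2$, normalized by $|2| = 1/2$. The notation $\overline{D}(a,\delta)$ denotes the closed disk $\{z \in \mathbb{C}_2 : |z-a| \le \delta\}$. Here $f_1$ is the member with $t=1$ of the family $f_t(z) = -\tfrac32 t(-2z^3+3z^2)+1$. *)

theory Defs
  imports Complex_Main "HOL-Computational_Algebra.Polynomial"
begin

text \<open>We axiomatise the structure
  (K, abs) abstractly: K a field, abs a non-archimedean absolute value on K with
  abs 2 = 1/2 (so on Q it restricts to the 2-adic absolute value), K complete with
  respect to abs and algebraically closed. C_2 is an instance.\<close>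

definition two_adic_C2_like :: "('a::field_char_0 \<Rightarrow> real) \<Rightarrow> bool" where
  "two_adic_C2_like av \<longleftrightarrow>
     (\<forall>x. av x \<ge> 0) \<and>
     (\<forall>x. av x = 0 \<longleftrightarrow> x = 0) \<and>
     (\<forall>x y. av (x * y) = av x * av y) \<and>
     (\<forall>x y. av (x + y) \<le> max (av x) (av y)) \<and>
     av 2 = 1/2 \<and>
     (\<forall>s :: nat \<Rightarrow> 'a.
        (\<forall>e>0. \<exists>N. \<forall>m\<ge>N. \<forall>n\<ge>N. av (s m - s n) < e) \<longrightarrow>
        (\<exists>L. \<forall>e>0. \<exists>N. \<forall>n\<ge>N. av (s n - L) < e)) \<and>
     (\<forall>p :: 'a poly. degree p > 0 \<longrightarrow> (\<exists>x. poly p x = 0))"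

definition f_fam :: "'a::field_char_0 \<Rightarrow> 'a \<Rightarrow> 'a" where
  "f_fam t z = -(3/2) * t * (-2 * z^3 + 3 * z^2) + 1"

definition cdisk :: "('a::field_char_0 \<Rightarrow> real) \<Rightarrow> 'a \<Rightarrow> real \<Rightarrow> 'a set" where
  "cdisk av a \<delta> = {z. av (z - a) \<le> \<delta>}"

definition unbounded_orbit :: "('a \<Rightarrow> real) \<Rightarrow> ('a \<Rightarrow> 'a) \<Rightarrow> 'a \<Rightarrow> bool" where
  "unbounded_orbit av f z \<longleftrightarrow> \<not> (\<exists>B. \<forall>k. av ((f ^^ k) z) \<le> B)"

end

theory Submission
  imports Defs
begin

text \<open>In the coordinate \<open>u = z + 1/2\<close> the map \<open>f\<^sub>1\<close> reads
  \<open>u \<mapsto> 27/4 u - 9 u^2 + 3 u^3\<close>. Since \<open>|27/4| = 4\<close>, the linear term dominates on small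
  disks: the disk of radius \<open>2^-(2m+3)\<close> about \<open>u = 4^(m+1)\<close> is mapped into the disk of radius
  \<open>2^-(2m+1)\<close> about \<open>4^m\<close>. After \<open>n\<close> steps a point reaches the disk of radius \<open>1/2\<close>
  about \<open>u = 1\<close>, whose image has absolute value \<open>4\<close>. Once \<open>|z| \<ge> 4\<close> the cubic term
  dominates, \<open>|f\<^sub>1 z| = |z|^3 \<ge> 4 |z|\<close>, so the orbit grows geometrically.\<close>

lemma f_fam_1_shifted:
  "f_fam 1 z + 1/2 = 27/4 * (z + 1/2) - 9 * (z + 1/2)^2 + 3 * (z + 1/2)^3"
  unfolding f_fam_def by (simp add: field_simps power2_eq_square power3_eq_cube)

lemma unbounded_orbit_if_exponential_growth:
  assumes "(c::real) > 1" and "\<And>j. c ^ j \<le> av ((f ^^ j) z)"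
  shows "unbounded_orbit av f z"
  unfolding unbounded_orbit_def
proof
  assume "\<exists>B. \<forall>k. av ((f ^^ k) z) \<le> B"
  then obtain B where "\<And>k. av ((f ^^ k) z) \<le> B" by blast
  moreover obtain j where "B < c ^ j" using real_arch_pow[OF assms(1)] by blast
  ultimately show False using assms(2)[of j] by (meson not_le order_trans)
qed

lemma unbounded_orbit_funpow:
  assumes "unbounded_orbit av f ((f ^^ k) z)"
  shows "unbounded_orbit av f z"
  using assms unfolding unbounded_orbit_def by (metis funpow_add o_apply)

locale two_adic_absolute_value =
  fixes av :: "'a::field_char_0 \<Rightarrow> real"
  assumes av_nonneg: "av x \<ge> 0"
    and av_eq_0_iff: "av x = 0 \<longleftrightarrow> x = 0"
    and av_mult: "av (x * y) = av x * av y"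
    and av_add_le_max: "av (x + y) \<le> max (av x) (av y)"
    and av_2: "av 2 = 1/2"
begin

lemma av_0: "av 0 = 0"
  using av_eq_0_iff by simp

lemma av_1: "av 1 = 1"
proof -
  have "av 1 * av 1 = av 1 * 1" using av_mult[of 1 1] by simp
  moreover have "av 1 \<noteq> 0" using av_eq_0_iff by simp
  ultimately show ?thesis by (metis mult_left_cancel)
qed

lemma av_minus: "av (- x) = av x"
proof -
  have "av (-1) * av (-1) = 1" using av_mult[of "-1" "-1"] av_1 by simp
  then have "av (-1) = 1" using av_nonneg[of "-1"]
    by (metis abs_of_nonneg power2_eq_square real_sqrt_abs real_sqrt_one)
  then show ?thesis using av_mult[of "-1" x] by simp
qed

lemma av_add_le: "av x \<le> B \<Longrightarrow> av y \<le> B \<Longrightarrow> av (x + y) \<le> B"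
  using av_add_le_max[of x y] by simp

lemma av_diff_le: "av x \<le> B \<Longrightarrow> av y \<le> B \<Longrightarrow> av (x - y) \<le> B"
  using av_add_le[of x B "- y"] av_minus[of y] by simp

lemma av_add_eq_left:
  assumes "av y < av x"
  shows "av (x + y) = av x"
proof -
  have "av x \<le> max (av (x + y)) (av (- y))" using av_add_le_max[of "x + y" "- y"] by simp
  then have "av x \<le> av (x + y)" using assms av_minus[of y] by auto
  moreover have "av (x + y) \<le> av x" using av_add_le_max[of x y] assms by simp
  ultimately show ?thesis by simp
qed

lemma av_power: "av (x ^ k) = av x ^ k"
  by (induction k) (simp_all add: av_1 av_mult)

lemma av_power_le_self: "av x \<le> 1 \<Longrightarrow> 0 < k \<Longrightarrow> av (x ^ k) \<le> av x"
  using power_decreasing[of 1 k "av x"] av_nonneg[of x] by (simp add: av_power)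

lemma av_divide: "av (x / y) = av x / av y"
proof (cases "y = 0")
  case False
  then have "av x = av (x / y) * av y" using av_mult[of "x / y" y] by simp
  moreover have "av y \<noteq> 0" using False av_eq_0_iff by simp
  ultimately show ?thesis by (simp add: eq_divide_eq)
qed (simp add: av_0)

lemma av_of_nat_le_1: "av (of_nat k) \<le> 1"
proof (induction k)
  case (Suc k)
  then show ?case using av_add_le[of 1 1 "of_nat k"] av_1 by (simp add: add.commute)
qed (simp add: av_0)

lemma av_numeral_le_1: "av (numeral k) \<le> 1"
  using av_of_nat_le_1[of "numeral k"] by simp

lemma av_mult_numeral_le:
  assumes "av x \<le> B"
  shows "av (numeral k * x) \<le> B"
proof -
  have "av (numeral k * x) \<le> 1 * av x"
    unfolding av_mult using av_numeral_le_1 av_nonneg by (rule mult_right_mono)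
  then show ?thesis using assms by simp
qed

lemma av_3: "av 3 = 1"
  using av_add_eq_left[of 2 1] av_1 av_2 by simp

lemma av_4: "av 4 = 1/4"
  using av_mult[of 2 2] av_2 by simp

lemma av_27_div_4: "av (27 / 4) = 4"
  using av_divide[of 27 4] av_power[of 3 3] av_3 av_4 by simp

lemma av_26_le: "av 26 \<le> 1/2"
proof -
  have "av (13 :: 'a) \<le> 1" by (rule av_numeral_le_1)
  then show ?thesis using av_mult[of 2 13] av_2 by simp
qed

lemma av_f_fam_1_large:
  assumes z: "av z \<ge> 4"
  shows "av (f_fam 1 z) = av z ^ 3"
proof -
  have eq: "f_fam 1 z = 3 * z^3 + (1 - 9/2 * z^2)" unfolding f_fam_def by (simp add: field_simps)
  have cubic: "av (3 * z^3) = av z ^ 3" using av_mult av_3 av_power by simp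
  have "av (9 :: 'a) \<le> 1" by (rule av_numeral_le_1)
  then have "av (9/2 :: 'a) \<le> 2" using av_divide[of 9 2] av_2 by simp
  then have "av (9/2 * z^2) \<le> 2 * av z ^ 2"
    using av_mult[of "9/2" "z^2"] av_power av_nonneg[of z]
    by (simp del: times_divide_eq_left add: mult_right_mono)
  also have "\<dots> < av z ^ 3" using z by (simp add: power3_eq_cube power2_eq_square)
  finally have "av (9/2 * z^2) < av z ^ 3" .
  moreover have "1 < av z ^ 3" using z by simp
  moreover have "av (1 - 9/2 * z^2) \<le> max 1 (av (9/2 * z^2))"
    by (rule av_diff_le) (simp_all add: av_1)
  ultimately have "av (1 - 9/2 * z^2) < av (3 * z^3)" using cubic by simp
  then show ?thesis unfolding eq using av_add_eq_left cubic by simp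
qed

lemma av_f_fam_1_ge:
  assumes z: "av z \<ge> 4"
  shows "av (f_fam 1 z) \<ge> 4 * av z"
proof -
  have "4 * 1 \<le> av z * av z" using z by (intro mult_mono) simp_all
  then have "4 * av z \<le> av z * av z * av z" using z by (intro mult_right_mono) simp_all
  then show ?thesis using av_f_fam_1_large[OF z] by (simp add: power3_eq_cube)
qed

lemma unbounded_orbit_if_av_ge_4:
  assumes "av z \<ge> 4"
  shows "unbounded_orbit av (f_fam 1) z"
proof (rule unbounded_orbit_if_exponential_growth)
  have growth: "4 ^ Suc j \<le> av ((f_fam 1 ^^ j) z)" for j
  proof (induction j)
    case (Suc j)
    let ?x = "(f_fam 1 ^^ j) z"
    have "(4::real) \<le> 4 ^ Suc j" by simp
    then have "4 \<le> av ?x" using Suc by linarith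
    have "4 ^ Suc (Suc j) \<le> 4 * av ?x" using Suc by simp
    also have "\<dots> \<le> av (f_fam 1 ?x)" using av_f_fam_1_ge[OF \<open>4 \<le> av ?x\<close>] .
    finally show ?case by simp
  qed (use assms in simp)
  show "4 ^ j \<le> av ((f_fam 1 ^^ j) z)" for j
  proof -
    have "(4::real) ^ j \<le> 4 ^ Suc j" by simp
    then show ?thesis using growth[of j] by linarith
  qed
qed simp

text \<open>Writing \<open>u = 4^(m+1) + w\<close>, the image is \<open>4^m + (26 \<cdot> 4^m + 27/4 w - 9 u^2 + 3 u^3)\<close>;
  the error terms are small because \<open>26\<close> is even, \<open>|27/4| = 4\<close> and \<open>|u| \<le> 4^-(m+1)\<close>.\<close>
lemma f_fam_1_disk_step:
  assumes h: "av (z + 1/2 - 4 ^ Suc m) \<le> 1 / 2 ^ (2*m+3)"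
  shows "av (f_fam 1 z + 1/2 - 4 ^ m) \<le> 1 / 2 ^ (2*m+1)"
proof -
  define u where "u = z + 1/2"
  define w where "w = u - 4 ^ Suc m"
  define r :: real where "r = (1/4) ^ m"
  have r: "0 \<le> r" "r \<le> 1" unfolding r_def by (auto simp: power_le_one)
  have radii: "(1::real) / 2 ^ (2*m+3) = r/8" "(1::real) / 2 ^ (2*m+1) = r/2"
    unfolding r_def by (simp_all add: power_add power_mult power_divide)
  have w: "av w \<le> r/8" using h radii unfolding w_def u_def by simp
  have av_4m: "av (4 ^ m) = r" unfolding r_def using av_power[of 4 m] av_4 by simp
  have eq: "f_fam 1 z + 1/2 - 4 ^ m = 26 * 4 ^ m + 27/4 * w - 9 * u^2 + 3 * u^3"
    unfolding w_def u_def f_fam_1_shifted by (simp add: algebra_simps)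
  have "av (26 :: 'a) * r \<le> 1/2 * r" using av_26_le r(1) by (rule mult_right_mono)
  then have t1: "av (26 * 4 ^ m) \<le> r/2" using av_mult[of 26 "4 ^ m"] av_4m by simp
  have t2: "av (27/4 * w) \<le> r/2"
    using av_mult[of "27/4" w] av_27_div_4 w by (simp del: times_divide_eq_left)
  have "av (4 ^ Suc m) = r/4" using av_mult[of 4 "4 ^ m"] av_4m av_4 by simp
  then have u: "av u \<le> r/4"
    using av_add_le[of "4 ^ Suc m" "r/4" w] w r unfolding w_def by simp
  have small: "av (u ^ k) \<le> r/2" if "0 < k" for k
  proof -
    have "av u \<le> 1" using u r by simp
    then show ?thesis using av_power_le_self[OF _ that] u r by fastforce
  qed
  have t3: "av (9 * u^2) \<le> r/2" and t4: "av (3 * u^3) \<le> r/2"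
    by (rule av_mult_numeral_le, rule small, simp)+
  have "av (26 * 4 ^ m + 27/4 * w - 9 * u^2 + 3 * u^3) \<le> r/2"
    using av_add_le[OF av_diff_le[OF av_add_le[OF t1 t2] t3] t4] .
  then show ?thesis unfolding eq radii(2) .
qed

lemma f_fam_1_disk_base:
  assumes h: "av (z + 1/2 - 1) \<le> 1/2"
  shows "av (f_fam 1 z) = 4"
proof -
  define u where "u = z + 1/2"
  have "av (1 + (u - 1)) = av 1" using h av_1 av_add_eq_left[of "u - 1" 1] unfolding u_def by simp
  then have u: "av u = 1" using av_1 by simp
  have eq: "f_fam 1 z = 27/4 * u + (- (1/2) - 9 * u^2 + 3 * u^3)"
    using f_fam_1_shifted[of z] unfolding u_def by (simp add: algebra_simps)
  have lin: "av (27/4 * u) = 4"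
    using av_mult[of "27/4" u] av_27_div_4 u by (simp del: times_divide_eq_left)
  have "av (- (1/2) :: 'a) = 2" using av_minus av_divide[of 1 2] av_1 av_2 by simp
  moreover have "av (9 * u^2) \<le> 2" "av (3 * u^3) \<le> 2"
    by (rule av_mult_numeral_le, simp add: av_power u)+
  ultimately have "av (- (1/2) - 9 * u^2 + 3 * u^3) \<le> 2"
    by (intro av_add_le av_diff_le) simp_all
  then have "av (- (1/2) - 9 * u^2 + 3 * u^3) < av (27/4 * u)" using lin by simp
  then show ?thesis unfolding eq using lin by (simp only: av_add_eq_left)
qed

lemma f_fam_1_reaches_av_4:
  "av (z + 1/2 - 4 ^ n) \<le> 1 / 2 ^ (2*n+1) \<Longrightarrow> \<exists>k. av ((f_fam 1 ^^ k) z) \<ge> 4"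
proof (induction n arbitrary: z)
  case 0
  then have "av ((f_fam 1 ^^ 1) z) = 4" using f_fam_1_disk_base by simp
  then show ?case by (metis order_refl)
next
  case (Suc m)
  then have "av (f_fam 1 z + 1/2 - 4 ^ m) \<le> 1 / 2 ^ (2*m+1)"
    by (intro f_fam_1_disk_step) (simp add: numeral_3_eq_3)
  from Suc.IH[OF this] obtain k where "av ((f_fam 1 ^^ k) (f_fam 1 z)) \<ge> 4" by blast
  then have "av ((f_fam 1 ^^ Suc k) z) \<ge> 4" by (simp only: funpow_Suc_right o_apply)
  then show ?case by blast
qed

end

lemma two_adic_C2_like_imp_absolute_value:
  "two_adic_C2_like av \<Longrightarrow> two_adic_absolute_value av"
  unfolding two_adic_C2_like_def two_adic_absolute_value_def by blast

theorem mainTheorem8: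
  fixes av :: "'a::field_char_0 \<Rightarrow> real" and n :: nat and z :: 'a
  assumes "two_adic_C2_like av"
    and "z \<in> cdisk av (-(1/2) + 2 ^ (2*n)) (1 / 2 ^ (2*n+1))"
  shows "unbounded_orbit av (f_fam 1) z"
proof -
  interpret two_adic_absolute_value av
    using assms(1) by (rule two_adic_C2_like_imp_absolute_value)
  have "z + 1/2 - 4 ^ n = z - (-(1/2) + 2 ^ (2*n))" by (simp add: power_mult)
  then have "av (z + 1/2 - 4 ^ n) \<le> 1 / 2 ^ (2*n+1)"
    using assms(2) unfolding cdisk_def by (simp only: mem_Collect_eq)
  then obtain k where "av ((f_fam 1 ^^ k) z) \<ge> 4" using f_fam_1_reaches_av_4 by blast
  then show ?thesis by (rule unbounded_orbit_funpow[OF unbounded_orbit_if_av_ge_4])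
qed

end
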